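(* For $n\ge1$, $$b_n(1;t,1,1)=\sum_{k=0}^{n-1}c(n,k+1)t^k\quad\text{and}\quad b_n(1;1,1,t)=b_n(1;t,t,1)=\sum_{k=0}^{n-1}e(n,k)t^k.$$ That is, the number of inversion sequences of length $n$ with exactly $k$ levels equals $c(n,k+1)$, and the number with exactly $k$ ascents, as well as the number with exactly $k$ indices that are levels or descents, equals $e(n,k)$.
   Context: An inversion sequence of length $n$ is a sequence $\rho=\rho_1\cdots\rho_n$ of integers with $1\le \rho_i\le i$ for all $i$; $I_n$ is the set of them. A level, descent, or ascent of $\rho$ is an index $i\in[n-1]$ with $\rho_i=\rho_{i+1}$, $\rho_i>\rho_{i+1}$, or $\rho_i<\rho_{i+1}$, respectively. Define $b_n(1;p,q,r)=\sum_{\rho\in I_n}p^{\mathrm{lev}(\rho)}q^{\mathrm{des}(\rho)}r^{\mathrm{asc}(\rho)}$. Here $c(n,k)$ is the signless Stirling number of the first kind (number of permutations of $[n]$ with $k$ cycles) and $e(n,k)$ is the Eulerian number (number of permutations of $[n]$ with $k$ ascents). *)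

theory Defs
  imports "HOL-Combinatorics.Combinatorics" "HOL-Library.FuncSet"
begin

definition inv_seqs :: "nat \<Rightarrow> (nat \<Rightarrow> nat) set" where
  "inv_seqs n = (\<Pi>\<^sub>E i\<in>{1..n}. {1..i})"

definition levels :: "nat \<Rightarrow> (nat \<Rightarrow> nat) \<Rightarrow> nat" where
  "levels n \<rho> = card {i\<in>{1..<n}. \<rho> i = \<rho> (Suc i)}"

definition descents :: "nat \<Rightarrow> (nat \<Rightarrow> nat) \<Rightarrow> nat" where
  "descents n \<rho> = card {i\<in>{1..<n}. \<rho> i > \<rho> (Suc i)}"

definition ascents :: "nat \<Rightarrow> (nat \<Rightarrow> nat) \<Rightarrow> nat" where
  "ascents n \<rho> = card {i\<in>{1..<n}. \<rho> i < \<rho> (Suc i)}"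

definition b1 :: "nat \<Rightarrow> 'a::comm_semiring_1 \<Rightarrow> 'a \<Rightarrow> 'a \<Rightarrow> 'a" where
  "b1 n p q r = (\<Sum>\<rho>\<in>inv_seqs n. p ^ levels n \<rho> * q ^ descents n \<rho> * r ^ ascents n \<rho>)"

definition eulerian :: "nat \<Rightarrow> nat \<Rightarrow> nat" where
  "eulerian n k = card {\<sigma>. \<sigma> permutes {1..n} \<and> card {i\<in>{1..<n}. \<sigma> i < \<sigma> (Suc i)} = k}"

end

theory Submission
  imports Defs
begin

text \<open>
  An inversion sequence of length n+1 is one of length n followed by a free last entry
  a \<in> {1..n+1}, and exactly one choice (a = \<rho> n) creates a new level; so the level
  counts obey the recurrence c(n+1,k+1) = n c(n,k+1) + c(n,k) of the Stirling numbers.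
  For ascents, recording for every position i the rank of \<sigma> i among \<sigma> 1, ..., \<sigma> i
  is a bijection from permutations of {1..n} onto inversion sequences which keeps the
  ascent positions.  Levels and descents together are the non-ascents, and composing
  a permutation with the complement x \<mapsto> n+1-x turns its descents into ascents.
\<close>

lemma card_filter_bij_betw:
  assumes "bij_betw f A B"
  shows "card {b\<in>B. P b} = card {a\<in>A. P (f a)}"
proof -
  have "{b\<in>B. P b} = f ` {a\<in>A. P (f a)}"
    using assms by (auto simp: bij_betw_def)
  moreover have "inj_on f {a\<in>A. P (f a)}"
    using assms by (auto simp: bij_betw_def intro: inj_on_subset)
  ultimately show ?thesis by (simp add: card_image)
qed

lemma card_filter_times:
  assumes "finite A" "finite B"
  shows "card {x\<in>A \<times> B. P x} = (\<Sum>b\<in>B. card {a\<in>A. P (a, b)})"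
proof -
  have "card {x\<in>A \<times> B. P x} = (\<Sum>x\<in>A \<times> B. if P x then 1 else 0)"
    using assms by (simp add: sum.If_cases Int_def)
  also have "\<dots> = (\<Sum>a\<in>A. \<Sum>b\<in>B. if P (a, b) then 1 else 0)"
    by (simp add: sum.cartesian_product)
  also have "\<dots> = (\<Sum>b\<in>B. \<Sum>a\<in>A. if P (a, b) then 1 else 0)"
    by (rule sum.swap)
  also have "\<dots> = (\<Sum>b\<in>B. card {a\<in>A. P (a, b)})"
    using assms by (simp add: sum.If_cases Int_def)
  finally show ?thesis .
qed

lemma card_filter_atLeastLessThan_le: "card {i\<in>{1..<n}. P i} \<le> n - 1"
  by (rule order_trans[OF card_mono[of "{1..<n}"]]) auto

lemma sum_power_eq_sum_card:
  fixes t :: "'a::comm_semiring_1"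
  assumes "finite A" "\<And>a. a \<in> A \<Longrightarrow> g a \<le> m"
  shows "(\<Sum>a\<in>A. t ^ g a) = (\<Sum>k=0..m. of_nat (card {a\<in>A. g a = k}) * t ^ k)"
proof -
  have "(\<Sum>a\<in>A. t ^ g a) = (\<Sum>k=0..m. \<Sum>a\<in>{a\<in>A. g a = k}. t ^ g a)"
    by (rule sum.group[symmetric]) (use assms in auto)
  also have "\<dots> = (\<Sum>k=0..m. of_nat (card {a\<in>A. g a = k}) * t ^ k)"
    by simp
  finally show ?thesis .
qed

lemma finite_inv_seqs [simp]: "finite (inv_seqs n)"
  unfolding inv_seqs_def by (intro finite_PiE) auto

lemma card_inv_seqs: "card (inv_seqs n) = fact n"
  unfolding inv_seqs_def by (simp add: card_PiE fact_prod)

lemma inv_seqs_memD: "\<rho> \<in> inv_seqs n \<Longrightarrow> i \<in> {1..n} \<Longrightarrow> \<rho> i \<in> {1..i}"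
  unfolding inv_seqs_def by auto

lemma bij_betw_inv_seqs_Suc:
  "bij_betw (\<lambda>(a, \<rho>). \<rho>(Suc n := a)) ({1..Suc n} \<times> inv_seqs n) (inv_seqs (Suc n))"
proof -
  have "{1..Suc n} = insert (Suc n) {1..n}" by auto
  then have "inv_seqs (Suc n) = (\<lambda>(a, \<rho>). \<rho>(Suc n := a)) ` ({1..Suc n} \<times> inv_seqs n)"
    unfolding inv_seqs_def by (simp add: PiE_insert_eq)
  moreover have "inj_on (\<lambda>(a, \<rho>). \<rho>(Suc n := a)) ({1..Suc n} \<times> inv_seqs n)"
    unfolding inv_seqs_def by (rule inj_combinator[of "Suc n" "{1..n}" "\<lambda>i. {1..i}"]) simp
  ultimately show ?thesis by (simp add: bij_betw_def)
qed

lemma card_inv_seqs_Suc_filter: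
  "card {\<rho>\<in>inv_seqs (Suc n). P \<rho>} = (\<Sum>\<rho>\<in>inv_seqs n. card {a\<in>{1..Suc n}. P (\<rho>(Suc n := a))})"
  by (simp add: card_filter_bij_betw[OF bij_betw_inv_seqs_Suc] card_filter_times)

lemma levels_le: "levels n \<rho> \<le> n - 1"
  unfolding levels_def by (rule card_filter_atLeastLessThan_le)

lemma ascents_le: "ascents n \<rho> \<le> n - 1"
  unfolding ascents_def by (rule card_filter_atLeastLessThan_le)

lemma levels_plus_descents: "levels n \<rho> + descents n \<rho> = n - 1 - ascents n \<rho>"
proof -
  let ?A = "{i\<in>{1..<n}. \<rho> i < \<rho> (Suc i)}"
  have "levels n \<rho> + descents n \<rho>
      = card ({i\<in>{1..<n}. \<rho> i = \<rho> (Suc i)} \<union> {i\<in>{1..<n}. \<rho> i > \<rho> (Suc i)})"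
    unfolding levels_def descents_def by (rule card_Un_disjoint[symmetric]) auto
  also have "\<dots> = card ({1..<n} - ?A)"
    by (rule arg_cong[of _ _ card]) auto
  also have "\<dots> = n - 1 - ascents n \<rho>"
    unfolding ascents_def by (subst card_Diff_subset) auto
  finally show ?thesis .
qed

lemma levels_plus_descents_le: "levels n \<rho> + descents n \<rho> \<le> n - 1"
  by (simp add: levels_plus_descents)

lemma levels_fun_upd_Suc:
  assumes "n \<ge> 1"
  shows "levels (Suc n) (\<rho>(Suc n := a)) = levels n \<rho> + (if \<rho> n = a then 1 else 0)"
proof -
  have "{i\<in>{1..<Suc n}. (\<rho>(Suc n := a)) i = (\<rho>(Suc n := a)) (Suc i)}
      = {i\<in>{1..<n}. \<rho> i = \<rho> (Suc i)} \<union> (if \<rho> n = a then {n} else {})"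
    using assms by (auto simp: less_Suc_eq)
  then show ?thesis unfolding levels_def by (simp add: card_Un_disjoint)
qed

lemma card_levels_fun_upd_Suc:
  assumes "n \<ge> 1" "\<rho> \<in> inv_seqs n"
  shows "card {a\<in>{1..Suc n}. levels (Suc n) (\<rho>(Suc n := a)) = k}
       = (if levels n \<rho> + 1 = k then 1 else 0) + (if levels n \<rho> = k then n else 0)"
proof -
  have \<rho>n: "\<rho> n \<in> {1..n}" using inv_seqs_memD[OF assms(2), of n] assms(1) by auto
  have "{a\<in>{1..Suc n}. levels (Suc n) (\<rho>(Suc n := a)) = k}
      = (if levels n \<rho> + 1 = k then {\<rho> n} else {})
      \<union> (if levels n \<rho> = k then {1..Suc n} - {\<rho> n} else {})"
    using \<rho>n by (auto simp: levels_fun_upd_Suc[OF assms(1)])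
  moreover have "card ({1..Suc n} - {\<rho> n}) = n" using \<rho>n by simp
  ultimately show ?thesis by auto
qed

lemma card_levels_eq_stirling:
  assumes "n \<ge> 1"
  shows "card {\<rho>\<in>inv_seqs n. levels n \<rho> = k} = stirling n (Suc k)"
  using assms
proof (induction n arbitrary: k rule: nat_induct_at_least)
  case base
  have "inv_seqs 1 = {\<lambda>i. if i = 1 then 1 else undefined}"
    unfolding inv_seqs_def by (auto simp: PiE_def extensional_def fun_eq_iff)
  then show ?case by (cases k) (auto simp: levels_def)
next
  case (Suc n)
  have "card {\<rho>\<in>inv_seqs (Suc n). levels (Suc n) \<rho> = k}
     = (\<Sum>\<rho>\<in>inv_seqs n. (if levels n \<rho> + 1 = k then 1 else 0) + (if levels n \<rho> = k then n else 0))"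
    unfolding card_inv_seqs_Suc_filter
    by (intro sum.cong refl card_levels_fun_upd_Suc Suc.hyps)
  also have "\<dots> = card {\<rho>\<in>inv_seqs n. levels n \<rho> + 1 = k} + n * card {\<rho>\<in>inv_seqs n. levels n \<rho> = k}"
    by (simp add: sum.distrib sum.If_cases Int_def)
  also have "\<dots> = stirling (Suc n) (Suc k)"
    using Suc.IH Suc.hyps by (cases k) simp_all
  finally show ?case .
qed

definition rank_code :: "nat \<Rightarrow> (nat \<Rightarrow> nat) \<Rightarrow> nat \<Rightarrow> nat" where
  "rank_code n \<sigma> = (\<lambda>i\<in>{1..n}. Suc (card {j\<in>{1..<i}. \<sigma> j < \<sigma> i}))"

lemma rank_code_in_inv_seqs: "rank_code n \<sigma> \<in> inv_seqs n"
proof -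
  have "Suc (card {j\<in>{1..<i}. \<sigma> j < \<sigma> i}) \<in> {1..i}" if "i \<in> {1..n}" for i
    using card_filter_atLeastLessThan_le[of i "\<lambda>j. \<sigma> j < \<sigma> i"] that by auto
  then show ?thesis
    unfolding rank_code_def inv_seqs_def by auto
qed

lemma relative_order_eq_if_rank_counts_eq:
  fixes f g :: "nat \<Rightarrow> 'a::linorder"
  assumes "\<And>i. i \<in> {1..m} \<Longrightarrow> card {j\<in>{1..<i}. f j < f i} = card {j\<in>{1..<i}. g j < g i}"
  shows "\<forall>i\<in>{1..m}. \<forall>j\<in>{1..<i}. f j < f i \<longleftrightarrow> g j < g i"
  using assms
proof (induction m)
  case 0
  then show ?case by simp
next
  case (Suc m)
  have IH: "\<forall>i\<in>{1..m}. \<forall>j\<in>{1..<i}. f j < f i \<longleftrightarrow> g j < g i"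
    by (rule Suc.IH, rule Suc.prems) simp
  define Sf where "Sf = {j\<in>{1..<Suc m}. f j < f (Suc m)}"
  define Sg where "Sg = {j\<in>{1..<Suc m}. g j < g (Suc m)}"
  \<comment> \<open>By IH both sets are down-closed for one common order on {1..m}, hence nested.\<close>
  have "Sf \<subseteq> Sg \<or> Sg \<subseteq> Sf"
  proof (rule ccontr)
    assume "\<not> (Sf \<subseteq> Sg \<or> Sg \<subseteq> Sf)"
    then obtain a b where a: "a \<in> Sf" "a \<notin> Sg" and b: "b \<in> Sg" "b \<notin> Sf"
      by blast
    then have ord: "f a < f b" "g b < g a" and "a \<noteq> b"
      unfolding Sf_def Sg_def by auto
    have ab: "a \<in> {1..m}" "b \<in> {1..m}"
      using a b unfolding Sf_def Sg_def by auto
    show False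
    proof (cases "a < b")
      case True
      then have "f a < f b \<longleftrightarrow> g a < g b"
        using IH ab by simp
      then show False
        using ord by simp
    next
      case False
      then have "f b < f a \<longleftrightarrow> g b < g a"
        using IH ab \<open>a \<noteq> b\<close> by simp
      then show False
        using ord by simp
    qed
  qed
  moreover have "card Sf = card Sg"
    unfolding Sf_def Sg_def by (rule Suc.prems) simp
  moreover have "finite Sf" "finite Sg"
    unfolding Sf_def Sg_def by simp_all
  ultimately have "Sf = Sg"
    by (metis card_subset_eq)
  show ?case
  proof (intro ballI)
    fix i j
    assume ij: "i \<in> {1..Suc m}" "j \<in> {1..<i}"
    show "f j < f i \<longleftrightarrow> g j < g i"
    proof (cases "i = Suc m")
      case True
      then show ?thesis
        using \<open>Sf = Sg\<close> ij unfolding Sf_def Sg_def by blast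
    next
      case False
      then show ?thesis
        using IH ij by simp
    qed
  qed
qed

lemma card_less_permutes_value:
  assumes "\<sigma> permutes {1..n}" "i \<in> {1..n}"
  shows "card {j\<in>{1..n}. \<sigma> j < \<sigma> i} = \<sigma> i - 1"
proof -
  have "\<sigma> i \<in> {1..n}"
    using permutes_in_image[OF assms(1)] assms(2) by simp
  then have "{1..<\<sigma> i} = {x\<in>\<sigma> ` {1..n}. x < \<sigma> i}"
    unfolding permutes_image[OF assms(1)] by auto
  also have "\<dots> = \<sigma> ` {j\<in>{1..n}. \<sigma> j < \<sigma> i}"
    by (rule Compr_image_eq)
  finally have "card {1..<\<sigma> i} = card {j\<in>{1..n}. \<sigma> j < \<sigma> i}"
    using permutes_inj_on[OF assms(1)] by (simp add: card_image)
  then show ?thesis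
    by simp
qed

lemma permutes_eq_if_relative_order_eq:
  fixes \<sigma> \<tau> :: "nat \<Rightarrow> nat"
  assumes \<sigma>: "\<sigma> permutes {1..n}" and \<tau>: "\<tau> permutes {1..n}"
    and earlier: "\<forall>i\<in>{1..n}. \<forall>j\<in>{1..<i}. \<sigma> j < \<sigma> i \<longleftrightarrow> \<tau> j < \<tau> i"
  shows "\<sigma> = \<tau>"
proof
  fix i
  show "\<sigma> i = \<tau> i"
  proof (cases "i \<in> {1..n}")
    case True
    have same: "\<sigma> j < \<sigma> i \<longleftrightarrow> \<tau> j < \<tau> i" if j: "j \<in> {1..n}" for j
    proof (cases j i rule: linorder_cases)
      case less
      then show ?thesis
        using earlier j True by simp
    next
      case equal
      then show ?thesis by simp
    next
      case greater
      have "\<sigma> i < \<sigma> j \<longleftrightarrow> \<tau> i < \<tau> j"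
        using earlier greater j True by simp
      moreover have "\<sigma> i \<noteq> \<sigma> j" "\<tau> i \<noteq> \<tau> j"
        using greater injD[OF permutes_inj[OF \<sigma>], of i j] injD[OF permutes_inj[OF \<tau>], of i j]
        by auto
      ultimately show ?thesis
        by linarith
    qed
    have "card {j\<in>{1..n}. \<sigma> j < \<sigma> i} = card {j\<in>{1..n}. \<tau> j < \<tau> i}"
      using same by (intro arg_cong[of _ _ card] Collect_cong) blast
    moreover have "\<sigma> i \<ge> 1" "\<tau> i \<ge> 1"
      using True permutes_in_image[OF \<sigma>] permutes_in_image[OF \<tau>] by auto
    ultimately show ?thesis
      using card_less_permutes_value[OF \<sigma> True] card_less_permutes_value[OF \<tau> True] by arith
  next
    case False
    then show ?thesis
      using permutes_not_in[OF \<sigma>] permutes_not_in[OF \<tau>] by simp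
  qed
qed

lemma inj_on_rank_code: "inj_on (rank_code n) {\<sigma>. \<sigma> permutes {1..n}}"
proof (rule inj_onI)
  fix \<sigma> \<tau>
  assume "\<sigma> \<in> {\<sigma>. \<sigma> permutes {1..n}}" "\<tau> \<in> {\<sigma>. \<sigma> permutes {1..n}}"
    and eq: "rank_code n \<sigma> = rank_code n \<tau>"
  then have \<sigma>: "\<sigma> permutes {1..n}" and \<tau>: "\<tau> permutes {1..n}"
    by simp_all
  have "card {j\<in>{1..<i}. \<sigma> j < \<sigma> i} = card {j\<in>{1..<i}. \<tau> j < \<tau> i}" if "i \<in> {1..n}" for i
    using fun_cong[OF eq, of i] that unfolding rank_code_def by simp
  then have "\<forall>i\<in>{1..n}. \<forall>j\<in>{1..<i}. \<sigma> j < \<sigma> i \<longleftrightarrow> \<tau> j < \<tau> i"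
    by (rule relative_order_eq_if_rank_counts_eq)
  then show "\<sigma> = \<tau>"
    by (rule permutes_eq_if_relative_order_eq[OF \<sigma> \<tau>])
qed

lemma bij_betw_rank_code: "bij_betw (rank_code n) {\<sigma>. \<sigma> permutes {1..n}} (inv_seqs n)"
proof -
  have sub: "rank_code n ` {\<sigma>. \<sigma> permutes {1..n}} \<subseteq> inv_seqs n"
    using rank_code_in_inv_seqs by auto
  have "card (rank_code n ` {\<sigma>. \<sigma> permutes {1..n}}) = card {\<sigma>. \<sigma> permutes {1..n}}"
    by (rule card_image[OF inj_on_rank_code])
  also have "\<dots> = fact n"
    by (rule card_permutations) simp_all
  finally have "card (rank_code n ` {\<sigma>. \<sigma> permutes {1..n}}) = fact n" .
  then have "rank_code n ` {\<sigma>. \<sigma> permutes {1..n}} = inv_seqs n"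
    using card_subset_eq[OF finite_inv_seqs sub] by (simp add: card_inv_seqs)
  then show ?thesis
    using inj_on_rank_code by (simp add: bij_betw_def)
qed

lemma rank_code_less_Suc_iff:
  assumes i: "i \<in> {1..<n}" and "\<sigma> i \<noteq> \<sigma> (Suc i)"
  shows "rank_code n \<sigma> i < rank_code n \<sigma> (Suc i) \<longleftrightarrow> \<sigma> i < \<sigma> (Suc i)"
proof -
  let ?T = "\<lambda>k. {j\<in>{1..<k}. \<sigma> j < \<sigma> k}"
  have code: "rank_code n \<sigma> i = Suc (card (?T i))" "rank_code n \<sigma> (Suc i) = Suc (card (?T (Suc i)))"
    using i by (simp_all add: rank_code_def)
  show ?thesis
  proof (cases "\<sigma> i < \<sigma> (Suc i)")
    case True
    then have "insert i (?T i) \<subseteq> ?T (Suc i)"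
      using i by auto
    then have "card (insert i (?T i)) \<le> card (?T (Suc i))"
      by (intro card_mono) auto
    then show ?thesis
      using True code by simp
  next
    case False
    then have "?T (Suc i) \<subseteq> ?T i"
      using assms by (auto simp: less_Suc_eq)
    then have "card (?T (Suc i)) \<le> card (?T i)"
      by (intro card_mono) auto
    then show ?thesis
      using False code by simp
  qed
qed

lemma ascents_rank_code:
  assumes "inj_on \<sigma> {1..n}"
  shows "ascents n (rank_code n \<sigma>) = ascents n \<sigma>"
proof -
  have "\<sigma> i \<noteq> \<sigma> (Suc i)" if "i \<in> {1..<n}" for i
    using inj_onD[OF assms, of i "Suc i"] that by auto
  then show ?thesis
    unfolding ascents_def using rank_code_less_Suc_iff
    by (intro arg_cong[of _ _ card] Collect_cong) blast
qed

lemma card_inv_seqs_filter_ascents: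
  "card {\<rho>\<in>inv_seqs n. P (ascents n \<rho>)} = card {\<sigma>. \<sigma> permutes {1..n} \<and> P (ascents n \<sigma>)}"
proof -
  have "card {\<rho>\<in>inv_seqs n. P (ascents n \<rho>)}
      = card {\<sigma>\<in>{\<sigma>. \<sigma> permutes {1..n}}. P (ascents n (rank_code n \<sigma>))}"
    by (rule card_filter_bij_betw[OF bij_betw_rank_code])
  also have "\<dots> = card {\<sigma>. \<sigma> permutes {1..n} \<and> P (ascents n \<sigma>)}"
    by (intro arg_cong[of _ _ card] Collect_cong) (auto simp: ascents_rank_code permutes_inj_on)
  finally show ?thesis .
qed

lemma card_ascents_eq_eulerian: "card {\<rho>\<in>inv_seqs n. ascents n \<rho> = k} = eulerian n k"
  unfolding card_inv_seqs_filter_ascents[where P = "\<lambda>a. a = k"] by (simp add: eulerian_def ascents_def)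

definition complement :: "nat \<Rightarrow> nat \<Rightarrow> nat" where
  "complement n x = (if x \<in> {1..n} then Suc n - x else x)"

lemma complement_complement [simp]: "complement n (complement n x) = x"
  unfolding complement_def by auto

lemma complement_permutes: "complement n permutes {1..n}"
proof (rule bij_imp_permutes)
  show "bij_betw (complement n) {1..n} {1..n}"
    by (rule bij_betw_byWitness[where f' = "complement n"]) (auto simp: complement_def)
  show "complement n x = x" if "x \<notin> {1..n}" for x
    using that by (auto simp: complement_def)
qed

lemma ascents_complement_comp:
  assumes "\<sigma> permutes {1..n}"
  shows "ascents n (complement n \<circ> \<sigma>) = descents n \<sigma>"
proof -
  have "complement n (\<sigma> i) < complement n (\<sigma> (Suc i)) \<longleftrightarrow> \<sigma> (Suc i) < \<sigma> i"
    if "i \<in> {1..<n}" for i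
    using that permutes_in_image[OF assms, of i] permutes_in_image[OF assms, of "Suc i"]
    by (auto simp: complement_def)
  then show ?thesis
    unfolding ascents_def descents_def by (intro arg_cong[of _ _ card] Collect_cong) auto
qed

lemma eulerian_eq_card_descents: "eulerian n k = card {\<sigma>. \<sigma> permutes {1..n} \<and> descents n \<sigma> = k}"
proof -
  have "bij_betw (\<lambda>\<sigma>. complement n \<circ> \<sigma>) {\<sigma>. \<sigma> permutes {1..n}} {\<sigma>. \<sigma> permutes {1..n}}"
    by (rule bij_betw_byWitness[where f' = "\<lambda>\<sigma>. complement n \<circ> \<sigma>"])
      (use complement_permutes[of n] in \<open>auto simp: fun_eq_iff intro: permutes_compose\<close>)
  then have "card {\<sigma>\<in>{\<sigma>. \<sigma> permutes {1..n}}. ascents n \<sigma> = k}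
      = card {\<sigma>\<in>{\<sigma>. \<sigma> permutes {1..n}}. ascents n (complement n \<circ> \<sigma>) = k}"
    by (rule card_filter_bij_betw)
  then show ?thesis
    unfolding eulerian_def ascents_def[symmetric]
    by (simp add: ascents_complement_comp cong: conj_cong)
qed

lemma descents_eq_if_inj_on:
  assumes "inj_on \<sigma> {1..n}"
  shows "descents n \<sigma> = n - 1 - ascents n \<sigma>"
proof -
  have "levels n \<sigma> = 0"
    using inj_onD[OF assms] unfolding levels_def by fastforce
  then show ?thesis
    using levels_plus_descents[of n \<sigma>] by simp
qed

lemma card_levels_plus_descents_eq_eulerian:
  "card {\<rho>\<in>inv_seqs n. levels n \<rho> + descents n \<rho> = k} = eulerian n k"
proof -
  have "card {\<rho>\<in>inv_seqs n. levels n \<rho> + descents n \<rho> = k}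
      = card {\<rho>\<in>inv_seqs n. n - 1 - ascents n \<rho> = k}"
    by (simp add: levels_plus_descents)
  also have "\<dots> = card {\<sigma>. \<sigma> permutes {1..n} \<and> n - 1 - ascents n \<sigma> = k}"
    by (rule card_inv_seqs_filter_ascents)
  also have "\<dots> = card {\<sigma>. \<sigma> permutes {1..n} \<and> descents n \<sigma> = k}"
    by (intro arg_cong[of _ _ card] Collect_cong) (auto simp: descents_eq_if_inj_on permutes_inj_on)
  also have "\<dots> = eulerian n k"
    by (rule eulerian_eq_card_descents[symmetric])
  finally show ?thesis .
qed

theorem theorem3p5:
  fixes n :: nat and t :: "'a::comm_semiring_1"
  assumes "n \<ge> 1"
  shows "b1 n t 1 1 = (\<Sum>k=0..n-1. of_nat (stirling n (k+1)) * t ^ k)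
       \<and> b1 n 1 1 t = (\<Sum>k=0..n-1. of_nat (eulerian n k) * t ^ k)
       \<and> b1 n t t 1 = (\<Sum>k=0..n-1. of_nat (eulerian n k) * t ^ k)
       \<and> (\<forall>k. card {\<rho>\<in>inv_seqs n. levels n \<rho> = k} = stirling n (k+1))
       \<and> (\<forall>k. card {\<rho>\<in>inv_seqs n. ascents n \<rho> = k} = eulerian n k)
       \<and> (\<forall>k. card {\<rho>\<in>inv_seqs n. levels n \<rho> + descents n \<rho> = k} = eulerian n k)"
proof -
  note lev = card_levels_eq_stirling[OF assms]
  have "b1 n t 1 1 = (\<Sum>\<rho>\<in>inv_seqs n. t ^ levels n \<rho>)"
    and "b1 n 1 1 t = (\<Sum>\<rho>\<in>inv_seqs n. t ^ ascents n \<rho>)"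
    and "b1 n t t 1 = (\<Sum>\<rho>\<in>inv_seqs n. t ^ (levels n \<rho> + descents n \<rho>))"
    by (simp_all add: b1_def power_add)
  moreover have "(\<Sum>\<rho>\<in>inv_seqs n. t ^ levels n \<rho>) = (\<Sum>k=0..n-1. of_nat (stirling n (k+1)) * t ^ k)"
    using levels_le[of n] by (subst sum_power_eq_sum_card[where m = "n - 1"]) (simp_all add: lev)
  moreover have "(\<Sum>\<rho>\<in>inv_seqs n. t ^ ascents n \<rho>) = (\<Sum>k=0..n-1. of_nat (eulerian n k) * t ^ k)"
    using ascents_le[of n] by (subst sum_power_eq_sum_card[where m = "n - 1"])
      (simp_all add: card_ascents_eq_eulerian)
  moreover have "(\<Sum>\<rho>\<in>inv_seqs n. t ^ (levels n \<rho> + descents n \<rho>))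
      = (\<Sum>k=0..n-1. of_nat (eulerian n k) * t ^ k)"
    using levels_plus_descents_le[of n] by (subst sum_power_eq_sum_card[where m = "n - 1"])
      (simp_all add: card_levels_plus_descents_eq_eulerian)
  ultimately show ?thesis
    using lev card_ascents_eq_eulerian card_levels_plus_descents_eq_eulerian by simp
qed

end
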